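(* Let $G_{12}$ be the graph with vertex set $\{1,\dots,12\}$ in which two distinct vertices are adjacent if and only if they both belong to one of the sets $\{1,4,7\}$, $\{2,4,5,6\}$, $\{2,4,6,7\}$, $\{2,4,6,9\}$, $\{2,4,9,12\}$, $\{2,5,8\}$, $\{2,6,7,11\}$, $\{2,11,12\}$, $\{3,6,9\}$, $\{4,5,6,10\}$, $\{4,10,12\}$, $\{6,10,11\}$, $\{10,11,12\}$. Then $G_{12}$ is not $\cup$-triangle, i.e., neither $G_{12}$ nor its complement is a triangle graph.
   Context: A graph $G$ is triangle if for every maximal stable set $S$ of $G$ and every edge $uv$ of $G$ with $u,v\notin S$, there is $s\in S$ adjacent to both $u$ and $v$. A graph is $\cup$-triangle if it or its complement is triangle. *)

theory Defs
  imports Main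
begin

text \<open>A (finite simple) graph is given by a vertex set V and an adjacency predicate E,
  which we only consult on pairs of vertices in V.\<close>

definition stable_set :: "'a set \<Rightarrow> ('a \<Rightarrow> 'a \<Rightarrow> bool) \<Rightarrow> 'a set \<Rightarrow> bool" where
  "stable_set V E S \<longleftrightarrow> S \<subseteq> V \<and> (\<forall>x\<in>S. \<forall>y\<in>S. \<not> E x y)"

definition maximal_stable_set :: "'a set \<Rightarrow> ('a \<Rightarrow> 'a \<Rightarrow> bool) \<Rightarrow> 'a set \<Rightarrow> bool" where
  "maximal_stable_set V E S \<longleftrightarrow> stable_set V E S \<and>
     (\<forall>T. stable_set V E T \<and> S \<subseteq> T \<longrightarrow> T = S)"

definition triangle_graph :: "'a set \<Rightarrow> ('a \<Rightarrow> 'a \<Rightarrow> bool) \<Rightarrow> bool" where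
  "triangle_graph V E \<longleftrightarrow>
     (\<forall>S. maximal_stable_set V E S \<longrightarrow>
        (\<forall>u\<in>V. \<forall>v\<in>V. E u v \<and> u \<notin> S \<and> v \<notin> S \<longrightarrow> (\<exists>s\<in>S. E s u \<and> E s v)))"

definition compl_graph :: "('a \<Rightarrow> 'a \<Rightarrow> bool) \<Rightarrow> 'a \<Rightarrow> 'a \<Rightarrow> bool" where
  "compl_graph E x y \<longleftrightarrow> x \<noteq> y \<and> \<not> E x y"

definition union_triangle :: "'a set \<Rightarrow> ('a \<Rightarrow> 'a \<Rightarrow> bool) \<Rightarrow> bool" where
  "union_triangle V E \<longleftrightarrow> triangle_graph V E \<or> triangle_graph V (compl_graph E)"

definition G12_cliques :: "nat set list" where
  "G12_cliques = [{1,4,7}, {2,4,5,6}, {2,4,6,7}, {2,4,6,9}, {2,4,9,12}, {2,5,8},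
     {2,6,7,11}, {2,11,12}, {3,6,9}, {4,5,6,10}, {4,10,12}, {6,10,11}, {10,11,12}]"

definition G12_V :: "nat set" where
  "G12_V = {1..12}"

definition G12_E :: "nat \<Rightarrow> nat \<Rightarrow> bool" where
  "G12_E x y \<longleftrightarrow> x \<noteq> y \<and> (\<exists>C\<in>set G12_cliques. x \<in> C \<and> y \<in> C)"

end

theory Submission
  imports Defs
begin

text \<open>Each half is refuted by one explicit maximal stable set and one edge outside it with no
  common neighbour in it: in \<open>G12\<close> the set \<open>{5,7,9}\<close> and the edge \<open>10 11\<close>; in the complement
  the set \<open>{2,11,12}\<close> (a clique of \<open>G12\<close>) and the edge \<open>7 9\<close>.\<close>

lemma maximal_stable_setI:
  assumes "stable_set V E S"
    and "\<And>v. v \<in> V \<Longrightarrow> v \<notin> S \<Longrightarrow> \<exists>s\<in>S. E s v"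
  shows "maximal_stable_set V E S"
  unfolding maximal_stable_set_def
proof (intro conjI assms(1) allI impI)
  fix T
  assume T: "stable_set V E T \<and> S \<subseteq> T"
  show "T = S"
  proof (rule ccontr)
    assume "T \<noteq> S"
    then obtain v where v: "v \<in> T" "v \<notin> S" using T by blast
    then have "v \<in> V" using T by (auto simp: stable_set_def)
    then obtain s where "s \<in> S" "E s v" using assms(2) v by blast
    then show False using T v by (auto simp: stable_set_def)
  qed
qed

lemma not_triangle_graphI:
  assumes "maximal_stable_set V E S"
    and "u \<in> V" "v \<in> V" "E u v" "u \<notin> S" "v \<notin> S"
    and "\<not> (\<exists>s\<in>S. E s u \<and> E s v)"
  shows "\<not> triangle_graph V E"
  using assms unfolding triangle_graph_def by blast

lemma G12_V_eq: "G12_V = set [1,2,3,4,5,6,7,8,9,10,11,12]"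
  by (simp add: G12_V_def atLeastAtMost_upt upt_rec numeral_eq_Suc)

lemma maximal_stable_set_G12: "maximal_stable_set G12_V G12_E {5,7,9}"
proof (rule maximal_stable_setI)
  show "stable_set G12_V G12_E {5,7,9}"
    by (simp add: stable_set_def G12_V_def G12_E_def G12_cliques_def)
  have "\<forall>v\<in>G12_V. v \<notin> {5,7,9} \<longrightarrow> (\<exists>s\<in>{5,7,9}. G12_E s v)"
    unfolding G12_V_eq by (simp add: G12_E_def G12_cliques_def)
  then show "\<exists>s\<in>{5,7,9}. G12_E s v" if "v \<in> G12_V" "v \<notin> {5,7,9}" for v
    using that by blast
qed

lemma maximal_stable_set_compl_G12: "maximal_stable_set G12_V (compl_graph G12_E) {2,11,12}"
proof (rule maximal_stable_setI)
  show "stable_set G12_V (compl_graph G12_E) {2,11,12}"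
    by (simp add: stable_set_def compl_graph_def G12_V_def G12_E_def G12_cliques_def)
  have "\<forall>v\<in>G12_V. v \<notin> {2,11,12} \<longrightarrow> (\<exists>s\<in>{2,11,12}. compl_graph G12_E s v)"
    unfolding G12_V_eq by (simp add: compl_graph_def G12_E_def G12_cliques_def)
  then show "\<exists>s\<in>{2,11,12}. compl_graph G12_E s v" if "v \<in> G12_V" "v \<notin> {2,11,12}" for v
    using that by blast
qed

theorem proposition42:
  shows "\<not> union_triangle G12_V G12_E"
proof -
  have "\<not> triangle_graph G12_V G12_E"
    by (rule not_triangle_graphI[OF maximal_stable_set_G12, of 10 11])
       (simp_all add: G12_V_def G12_E_def G12_cliques_def)
  moreover have "\<not> triangle_graph G12_V (compl_graph G12_E)"
    by (rule not_triangle_graphI[OF maximal_stable_set_compl_G12, of 7 9])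
       (simp_all add: G12_V_def compl_graph_def G12_E_def G12_cliques_def)
  ultimately show ?thesis
    by (simp add: union_triangle_def)
qed

end
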